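(* Let $f:(\mathbb{C}^3,0)\to(\mathbb{C}^3,0)$ be a half corner $$f(x,y,z)=(x+z^c(x+P),\; y+z^{c+1}(\beta+b_xx+b_yy+b_zz+\tilde Q),\; z+z^{c+2}R),$$ with $c\in\mathbb{N}^*$, $\beta,b_x,b_y,b_z\in\mathbb{C}$, $P,\tilde Q\in\mathfrak{m}^2$, and $R=\gamma+O(\mathfrak{m})$ with $\gamma\in\mathbb{C}$. Let $E=\{z=0\}$. - If $\beta\neq0$, then $f$ admits no formal $f$-invariant curve not contained in $E$. - If $\beta=0$ and $b_y\notin\gamma\mathbb{N}^*$, then $f$ admits a unique smooth formal $f$-invariant curve transverse to $E$.
   Context: $\mathfrak{m}$ is the maximal ideal at $0$. Formal curves are irreducible formal curves at $0$; $f$-invariant means mapped to itself by $f$. *)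

theory Defs
  imports "HOL-Computational_Algebra.Formal_Power_Series"
begin

text \<open>Formal power series in three variables x,y,z, given by their coefficient
  function: F i j k is the coefficient of x^i y^j z^k.\<close>
type_synonym mps3 = "nat \<Rightarrow> nat \<Rightarrow> nat \<Rightarrow> complex"

definition in_m2 :: "mps3 \<Rightarrow> bool" where
  "in_m2 F \<longleftrightarrow> (\<forall>i j k. i + j + k < 2 \<longrightarrow> F i j k = 0)"

text \<open>Substitution of one-variable series a,b,d (with zero constant term) into F.
  Only finitely many terms contribute to each coefficient.\<close>
definition mps3_eval :: "mps3 \<Rightarrow> complex fps \<Rightarrow> complex fps \<Rightarrow> complex fps \<Rightarrow> complex fps" where
  "mps3_eval F a b d =
     Abs_fps (\<lambda>n. \<Sum>i\<le>n. \<Sum>j\<le>n. \<Sum>k\<le>n. F i j k * fps_nth (a ^ i * b ^ j * d ^ k) n)"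

type_synonym arc = "complex fps \<times> complex fps \<times> complex fps"

definition formal_arc :: "arc \<Rightarrow> bool" where
  "formal_arc g \<longleftrightarrow> (case g of (a, b, d) \<Rightarrow> fps_nth a 0 = 0 \<and> fps_nth b 0 = 0 \<and> fps_nth d 0 = 0)"

text \<open>The half corner
  f(x,y,z) = (x + z^c (x+P), y + z^(c+1) (beta + bx x + by y + bz z + Q), z + z^(c+2) R),
  applied to a formal arc (i.e. the composition f \<circ> arc).\<close>
definition half_corner ::
  "nat \<Rightarrow> complex \<Rightarrow> complex \<Rightarrow> complex \<Rightarrow> complex \<Rightarrow> mps3 \<Rightarrow> mps3 \<Rightarrow> mps3 \<Rightarrow> arc \<Rightarrow> arc" where
  "half_corner c beta bx by' bz P Q R g = (case g of (a, b, d) \<Rightarrow>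
     (a + d ^ c * (a + mps3_eval P a b d),
      b + d ^ (c + 1) * (fps_const beta + fps_const bx * a + fps_const by' * b
                          + fps_const bz * d + mps3_eval Q a b d),
      d + d ^ (c + 2) * mps3_eval R a b d))"

definition arc_compose :: "arc \<Rightarrow> complex fps \<Rightarrow> arc" where
  "arc_compose g phi = (case g of (a, b, d) \<Rightarrow> (a oo phi, b oo phi, d oo phi))"

definition invariant_arc :: "(arc \<Rightarrow> arc) \<Rightarrow> arc \<Rightarrow> bool" where
  "invariant_arc F g \<longleftrightarrow> formal_arc g \<and> (\<exists>phi. fps_nth phi 0 = 0 \<and> F g = arc_compose g phi)"

end

theory Submission
  imports Defs
begin

unbundle fps_syntax

text \<open>
Invariance of the arc (a, b, d) means f \<circ> (a, b, d) = (a, b, d) \<circ> h for a reparametrization h.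

If \<beta> \<noteq> 0 and v is the order of d, the third component says that h fixes d modulo
t^(v(c+2)), and the second that h moves b by \<beta>' t^M modulo t^(M+1), where M = v(c+1) and
\<beta>' \<noteq> 0. Comparing coefficients of t^v, h'(0) is a v-th root of unity, so the v-fold iterate \<psi>
of h is tangent to the identity, still fixes d modulo t^(M+v), and moves b by v\<beta>' t^M. But a map
tangent to the identity that fixes d to this order agrees with t modulo t^(M+1), since its first
nonlinear term would reappear in d \<circ> \<psi> below order M+v; so \<psi> cannot move b at order M.

If \<beta> = 0 and the arc is (a, b, t), the third component forces h = t + t^(c+2) R(a, b, t), and
comparing coefficients turns invariance into a recursion determining a_n and b_n from lower
coefficients; solving for b_n means dividing by n\<gamma> - b_y, which the non-resonance condition
allows. A causal recursion has exactly one solution.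
\<close>

section \<open>Agreement of power series up to a given order\<close>

definition fps_agree :: "nat \<Rightarrow> 'a fps \<Rightarrow> 'a fps \<Rightarrow> bool" where
  "fps_agree n f g \<longleftrightarrow> (\<forall>m<n. f $ m = g $ m)"

lemma fps_agree_refl [simp]: "fps_agree n f f"
  by (simp add: fps_agree_def)

lemma fps_agree_sym: "fps_agree n f g \<Longrightarrow> fps_agree n g f"
  by (simp add: fps_agree_def)

lemma fps_agree_trans [trans]: "fps_agree n f g \<Longrightarrow> fps_agree n g h \<Longrightarrow> fps_agree n f h"
  by (simp add: fps_agree_def)

lemma fps_agree_mono: "fps_agree n f g \<Longrightarrow> m \<le> n \<Longrightarrow> fps_agree m f g"
  by (simp add: fps_agree_def)

lemma fps_agree_add: "fps_agree n f f' \<Longrightarrow> fps_agree n g g' \<Longrightarrow> fps_agree n (f + g) (f' + g')"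
  by (simp add: fps_agree_def)

lemma fps_agree_diff: "fps_agree n f f' \<Longrightarrow> fps_agree n g g' \<Longrightarrow> fps_agree n (f - g) (f' - g')"
  by (simp add: fps_agree_def)

lemma fps_agree_mult: "fps_agree n f f' \<Longrightarrow> fps_agree n g g' \<Longrightarrow> fps_agree n (f * g) (f' * g')"
  unfolding fps_agree_def fps_mult_nth by (auto intro!: sum.cong)

lemma fps_agree_power: "fps_agree n f g \<Longrightarrow> fps_agree n (f ^ k) (g ^ k)"
  by (induction k) (auto intro: fps_agree_mult)

lemma fps_agree_X_power_mult:
  "fps_agree n f g \<Longrightarrow> fps_agree (n + k) (fps_X ^ k * f) (fps_X ^ k * g)"
  by (simp add: fps_agree_def fps_X_power_mult_nth)

lemma fps_agree_add_X_power_mult: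
  "fps_agree n (f + fps_X ^ n * g) f"
  "fps_agree (n + 1) (f + fps_X ^ n * g) (f + fps_const (g $ 0) * fps_X ^ n)"
  by (auto simp: fps_agree_def fps_X_power_mult_nth)

lemma fps_agree_add_power_mult:
  fixes d f g :: "'a::comm_ring_1 fps"
  shows "fps_agree (subdegree d * k) (f + d ^ k * g) f"
    and "fps_agree (subdegree d * k + 1) (f + d ^ k * g)
      (f + fps_const ((d $ subdegree d) ^ k * g $ 0) * fps_X ^ (subdegree d * k))"
proof -
  define v e where "v = subdegree d" and "e = fps_shift (subdegree d) d"
  have "d = e * fps_X ^ v"
    unfolding e_def v_def by (rule subdegree_decompose)
  then have "d ^ k * g = fps_X ^ (subdegree d * k) * (fps_shift (subdegree d) d ^ k * g)"
    unfolding e_def[symmetric] v_def[symmetric] by (simp add: power_mult_distrib mult_ac flip: power_mult)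
  then show "fps_agree (subdegree d * k) (f + d ^ k * g) f"
    and "fps_agree (subdegree d * k + 1) (f + d ^ k * g)
      (f + fps_const ((d $ subdegree d) ^ k * g $ 0) * fps_X ^ (subdegree d * k))"
    using fps_agree_add_X_power_mult[of "subdegree d * k" f "fps_shift (subdegree d) d ^ k * g"]
    by (simp_all add: fps_nth_power_0)
qed

lemma fps_agree_compose_left: "fps_agree n f g \<Longrightarrow> fps_agree n (f oo h) (g oo h)"
  unfolding fps_agree_def fps_compose_nth by (auto intro!: sum.cong)

lemma fps_agree_compose_right: "fps_agree n h h' \<Longrightarrow> fps_agree n (f oo h) (f oo h')"
  using fps_agree_power[of n h h'] unfolding fps_agree_def fps_compose_nth
  by (auto intro!: sum.cong)

section \<open>Composition with maps tangent to the identity\<close>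

lemma fps_eq_X_power_mult_shift: "(\<And>i. i < j \<Longrightarrow> f $ i = 0) \<Longrightarrow> f = fps_X ^ j * fps_shift j f"
  by (rule fps_ext) (auto simp: fps_X_power_mult_nth)

lemma subdegree_pos: "f $ 0 = 0 \<Longrightarrow> f \<noteq> 0 \<Longrightarrow> subdegree f > 0"
  by (metis gr0I subdegree_eq_0_iff)

lemma fps_compose_nth_eq_add_sum:
  fixes f h :: "'a::comm_ring_1 fps"
  shows "(f oo h) $ N = f $ N + (\<Sum>i\<le>N. f $ i * (h ^ i - fps_X ^ i) $ N)"
proof -
  have "(f oo h) $ N = (\<Sum>i\<le>N. f $ i * (fps_X ^ i) $ N + f $ i * (h ^ i - fps_X ^ i) $ N)"
    unfolding fps_compose_nth atLeast0AtMost by (intro sum.cong) (simp_all add: right_diff_distrib)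
  also have "\<dots> = f $ N + (\<Sum>i\<le>N. f $ i * (h ^ i - fps_X ^ i) $ N)"
    by (simp add: sum.distrib mult_delta_right del: fps_sub_nth)
  finally show ?thesis .
qed

lemma fps_compose_nth_subdegree:
  fixes f h :: "'a::comm_ring_1 fps"
  assumes "h $ 0 = 0" "\<And>i. i < v \<Longrightarrow> f $ i = 0"
  shows "(f oo h) $ v = f $ v * (h $ 1) ^ v"
proof -
  have "(f oo h) $ v = (\<Sum>i=0..v. if i = v then f $ v * (h $ 1) ^ v else 0)"
    unfolding fps_compose_nth
    by (rule sum.cong) (auto simp: assms startsby_zero_power_nth_same)
  then show ?thesis by simp
qed

lemma near_identity_power:
  fixes \<rho> :: "'a::comm_ring_1 fps"
  assumes "s \<ge> 1"
  obtains W where "(fps_X + fps_X ^ (s + 1) * \<rho>) ^ i = fps_X ^ i + fps_X ^ (i + s) * W"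
    and "W $ 0 = of_nat i * \<rho> $ 0"
proof (induction i arbitrary: thesis)
  case 0
  then show ?case using 0[of 0] by simp
next
  case (Suc i)
  obtain W where W: "(fps_X + fps_X ^ (s + 1) * \<rho>) ^ i = fps_X ^ i + fps_X ^ (i + s) * W"
    "W $ 0 = of_nat i * \<rho> $ 0"
    using Suc.IH by blast
  define W' where "W' = W + \<rho> + fps_X ^ s * (W * \<rho>)"
  have "(fps_X + fps_X ^ (s + 1) * \<rho>) ^ Suc i
      = (fps_X ^ i + fps_X ^ (i + s) * W) * (fps_X + fps_X ^ (s + 1) * \<rho>)"
    by (metis W(1) power_Suc2)
  also have "\<dots> = fps_X ^ Suc i + fps_X ^ (Suc i + s) * W'"
    by (simp add: W'_def algebra_simps power_add)
  finally have "(fps_X + fps_X ^ (s + 1) * \<rho>) ^ Suc i = fps_X ^ Suc i + fps_X ^ (Suc i + s) * W'" .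
  moreover have "W' $ 0 = of_nat (Suc i) * \<rho> $ 0"
    using assms W(2) by (simp add: W'_def algebra_simps fps_X_power_mult_nth)
  ultimately show ?case using Suc.prems by blast
qed

lemma near_identity_power_diff_nth:
  fixes \<rho> \<phi> :: "'a::comm_ring_1 fps"
  assumes "s \<ge> 1" "\<phi> = fps_X + fps_X ^ (s + 1) * \<rho>"
  shows near_identity_power_diff_nth_below: "N < i + s \<Longrightarrow> (\<phi> ^ i - fps_X ^ i) $ N = 0"
    and near_identity_power_diff_nth_diag: "(\<phi> ^ i - fps_X ^ i) $ (i + s) = of_nat i * \<rho> $ 0"
proof -
  obtain W where "\<phi> ^ i = fps_X ^ i + fps_X ^ (i + s) * W" "W $ 0 = of_nat i * \<rho> $ 0"
    using near_identity_power[OF assms(1)] assms(2) by metis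
  then show "N < i + s \<Longrightarrow> (\<phi> ^ i - fps_X ^ i) $ N = 0"
    and "(\<phi> ^ i - fps_X ^ i) $ (i + s) = of_nat i * \<rho> $ 0"
    by (simp_all add: fps_X_power_mult_nth)
qed

lemma near_identity_compose_nth:
  fixes \<rho> \<phi> :: "'a::comm_ring_1 fps"
  assumes "s \<ge> 1" "\<phi> = fps_X + fps_X ^ (s + 1) * \<rho>" "k \<le> s"
  shows "(f oo \<phi>) $ (n + k) = f $ (n + k) + (\<Sum>i\<le>n. f $ i * (\<phi> ^ i - fps_X ^ i) $ (n + k))"
proof -
  have "(\<Sum>i\<le>n + k. f $ i * (\<phi> ^ i - fps_X ^ i) $ (n + k))
      = (\<Sum>i\<le>n. f $ i * (\<phi> ^ i - fps_X ^ i) $ (n + k))"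
    using assms(3) by (intro sum.mono_neutral_right)
      (auto simp: near_identity_power_diff_nth_below[OF assms(1,2)] simp del: fps_sub_nth)
  then show ?thesis by (simp add: fps_compose_nth_eq_add_sum)
qed

lemma near_identity_compose_eq_iff:
  fixes \<rho> \<phi> :: "'a::comm_ring_1 fps"
  assumes "s \<ge> 1" "\<phi> = fps_X + fps_X ^ (s + 1) * \<rho>" "k \<le> s"
  shows "f + fps_X ^ k * g = f oo \<phi> \<longleftrightarrow>
    (\<forall>n. g $ n = (\<Sum>i\<le>n. f $ i * (\<phi> ^ i - fps_X ^ i) $ (n + k)))"
proof -
  have below: "(f + fps_X ^ k * g) $ N = (f oo \<phi>) $ N" if "N < k" for N
    using that assms(3)
    by (simp add: fps_compose_nth_eq_add_sum fps_X_power_mult_nth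
        near_identity_power_diff_nth_below[OF assms(1,2)] del: fps_sub_nth)
  have "f + fps_X ^ k * g = f oo \<phi> \<longleftrightarrow> (\<forall>n. (f + fps_X ^ k * g) $ (n + k) = (f oo \<phi>) $ (n + k))"
    unfolding fps_eq_iff by (metis below add.commute le_add_diff_inverse2 not_le)
  then show ?thesis
    by (simp add: near_identity_compose_nth[OF assms] fps_X_power_mult_nth)
qed

section \<open>Substitution into trivariate series\<close>

lemma mps3_eval_nth:
  "mps3_eval F a b d $ n = (\<Sum>i\<le>n. \<Sum>j\<le>n. \<Sum>k\<le>n. F i j k * (a ^ i * b ^ j * d ^ k) $ n)"
  by (simp add: mps3_eval_def)

lemma mps3_eval_nth_0 [simp]: "mps3_eval F a b d $ 0 = F 0 0 0"
  by (simp add: mps3_eval_nth)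

lemma fps_agree_mps3_eval:
  assumes "fps_agree n a a'" "fps_agree n b b'" "fps_agree n d d'"
  shows "fps_agree n (mps3_eval F a b d) (mps3_eval F a' b' d')"
proof -
  have "fps_agree n (a ^ i * b ^ j * d ^ k) (a' ^ i * b' ^ j * d' ^ k)" for i j k
    by (intro fps_agree_mult fps_agree_power assms)
  then show ?thesis unfolding fps_agree_def mps3_eval_nth by auto
qed

lemma fps_agree_monomial_m2:
  fixes a b d a' b' d' :: "'a::comm_ring_1 fps"
  assumes "a $ 0 = 0" "b $ 0 = 0" "d $ 0 = 0" "a' $ 0 = 0" "b' $ 0 = 0" "d' $ 0 = 0"
    and "fps_agree n a a'" "fps_agree n b b'" "fps_agree n d d'" and "i + j + k \<ge> 2"
  shows "fps_agree (n + 1) (a ^ i * b ^ j * d ^ k) (a' ^ i * b' ^ j * d' ^ k)"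
proof -
  have monomial: "f ^ i * g ^ j * h ^ k = fps_X ^ (i + j + k) *
      (fps_shift 1 f ^ i * fps_shift 1 g ^ j * fps_shift 1 h ^ k)"
    if "f $ 0 = 0" "g $ 0 = 0" "h $ 0 = 0" for f g h :: "'a fps"
  proof -
    define F G H where "F = fps_shift 1 f" and "G = fps_shift 1 g" and "H = fps_shift 1 h"
    have "f = fps_X * F" "g = fps_X * G" "h = fps_X * H"
      using fps_eq_X_power_mult_shift[of 1] that unfolding F_def G_def H_def by auto
    then show ?thesis
      unfolding F_def[symmetric] G_def[symmetric] H_def[symmetric]
      by (simp add: power_mult_distrib power_add mult_ac)
  qed
  have "fps_agree (n - 1) (fps_shift 1 a ^ i * fps_shift 1 b ^ j * fps_shift 1 d ^ k)
      (fps_shift 1 a' ^ i * fps_shift 1 b' ^ j * fps_shift 1 d' ^ k)"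
    using assms(7-9) by (intro fps_agree_mult fps_agree_power) (auto simp: fps_agree_def)
  then have "fps_agree (n - 1 + (i + j + k)) (a ^ i * b ^ j * d ^ k) (a' ^ i * b' ^ j * d' ^ k)"
    unfolding monomial[OF assms(1-3)] monomial[OF assms(4-6)] by (rule fps_agree_X_power_mult)
  then show ?thesis
    by (rule fps_agree_mono) (use assms(10) in auto)
qed

lemma fps_agree_mps3_eval_m2:
  assumes "in_m2 F" "a $ 0 = 0" "b $ 0 = 0" "d $ 0 = 0" "a' $ 0 = 0" "b' $ 0 = 0" "d' $ 0 = 0"
    and "fps_agree n a a'" "fps_agree n b b'" "fps_agree n d d'"
  shows "fps_agree (n + 1) (mps3_eval F a b d) (mps3_eval F a' b' d')"
proof -
  have term_eq: "F i j k * (a ^ i * b ^ j * d ^ k) $ m = F i j k * (a' ^ i * b' ^ j * d' ^ k) $ m"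
    if "m < n + 1" for i j k m
  proof (cases "i + j + k < 2")
    case True
    then show ?thesis using assms(1) by (simp add: in_m2_def)
  next
    case False
    then have "fps_agree (n + 1) (a ^ i * b ^ j * d ^ k) (a' ^ i * b' ^ j * d' ^ k)"
      by (intro fps_agree_monomial_m2 assms(2-10)) auto
    then show ?thesis using that by (simp add: fps_agree_def)
  qed
  then show ?thesis
    unfolding fps_agree_def mps3_eval_nth by (intro allI impI sum.cong refl) (simp add: term_eq)
qed

section \<open>No invariant curve when \<beta> \<noteq> 0\<close>

primrec fps_compose_pow :: "nat \<Rightarrow> 'a::comm_ring_1 fps \<Rightarrow> 'a fps" where
  "fps_compose_pow 0 h = fps_X"
| "fps_compose_pow (Suc k) h = fps_compose_pow k h oo h"

lemma fps_compose_pow_nth_0 [simp]: "fps_compose_pow k h $ 0 = 0"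
  by (induction k) simp_all

lemma fps_compose_pow_nth_1:
  assumes "h $ 0 = 0"
  shows "fps_compose_pow k h $ 1 = (h $ 1) ^ k"
proof (induction k)
  case 0
  then show ?case by simp
next
  case (Suc k)
  have "(fps_compose_pow k h oo h) $ 1 = fps_compose_pow k h $ 1 * (h $ 1) ^ 1"
    by (rule fps_compose_nth_subdegree) (auto simp: assms)
  then show ?case using Suc.IH by simp
qed

lemma fps_compose_fps_compose_pow_Suc:
  fixes f h :: "'a::idom fps"
  assumes "h $ 0 = 0"
  shows "f oo fps_compose_pow (Suc k) h = (f oo fps_compose_pow k h) oo h"
  by (simp add: fps_compose_assoc assms)

lemma fps_agree_compose_pow_fixed:
  fixes f h :: "'a::idom fps"
  assumes "h $ 0 = 0" "fps_agree N (f oo h) f"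
  shows "fps_agree N (f oo fps_compose_pow k h) f"
proof (induction k)
  case 0
  then show ?case by simp
next
  case (Suc k)
  then have "fps_agree N ((f oo fps_compose_pow k h) oo h) (f oo h)"
    by (rule fps_agree_compose_left)
  then show ?case
    using assms fps_agree_trans by (metis fps_compose_fps_compose_pow_Suc)
qed

lemma fps_agree_compose_pow_drift:
  fixes b h :: "'a::idom fps"
  assumes "h $ 0 = 0" "(h $ 1) ^ M = 1"
    and "fps_agree (M + 1) (b oo h) (b + fps_const \<beta> * fps_X ^ M)"
  shows "fps_agree (M + 1) (b oo fps_compose_pow k h) (b + fps_const (of_nat k * \<beta>) * fps_X ^ M)"
proof (induction k)
  case 0
  then show ?case by simp
next
  case (Suc k)
  have h_power: "fps_agree (M + 1) (h ^ M) (fps_X ^ M)"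
    using assms(1,2) startsby_zero_power_prefix[of h M] startsby_zero_power_nth_same[of h M]
    by (auto simp: fps_agree_def less_Suc_eq)
  have "b oo fps_compose_pow (Suc k) h = (b oo fps_compose_pow k h) oo h"
    using assms(1) by (rule fps_compose_fps_compose_pow_Suc)
  also have "fps_agree (M + 1) \<dots> ((b + fps_const (of_nat k * \<beta>) * fps_X ^ M) oo h)"
    using Suc.IH by (rule fps_agree_compose_left)
  also have "(b + fps_const (of_nat k * \<beta>) * fps_X ^ M) oo h
      = (b oo h) + fps_const (of_nat k * \<beta>) * h ^ M"
    using assms(1)
    by (simp add: fps_compose_add_distrib fps_compose_power[OF assms(1), symmetric]
        fps_const_mult_apply_left[symmetric])
  also have "fps_agree (M + 1) \<dots> ((b + fps_const \<beta> * fps_X ^ M) + fps_const (of_nat k * \<beta>) * fps_X ^ M)"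
    by (intro fps_agree_add fps_agree_mult assms(3) h_power fps_agree_refl)
  also have "\<dots> = b + fps_const (of_nat (Suc k) * \<beta>) * fps_X ^ M"
    by (simp add: algebra_simps flip: fps_const_add fps_const_mult)
  finally show ?case .
qed

lemma near_identity_compose_nth_subdegree:
  fixes f \<rho> \<phi> :: "'a::comm_ring_1 fps"
  assumes "s \<ge> 1" "\<phi> = fps_X + fps_X ^ (s + 1) * \<rho>"
  shows "(f oo \<phi>) $ (subdegree f + s)
    = f $ (subdegree f + s) + of_nat (subdegree f) * f $ subdegree f * \<rho> $ 0"
proof -
  let ?v = "subdegree f"
  have "(\<Sum>i\<le>?v. f $ i * (\<phi> ^ i - fps_X ^ i) $ (?v + s))
      = (\<Sum>i\<in>{?v}. f $ i * (\<phi> ^ i - fps_X ^ i) $ (?v + s))"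
    by (rule sum.mono_neutral_right) (auto simp: nth_less_subdegree_zero)
  then show ?thesis
    using near_identity_compose_nth[OF assms order_refl, of f ?v]
    by (simp add: near_identity_power_diff_nth_diag[OF assms] del: fps_sub_nth)
qed

lemma tangent_to_identity_decompose:
  fixes \<psi> :: "'a::comm_ring_1 fps"
  assumes "\<psi> $ 0 = 0" "\<psi> $ 1 = 1" "\<psi> \<noteq> fps_X"
  obtains s \<rho> where "s \<ge> 1" "subdegree (\<psi> - fps_X) = s + 1"
    and "\<psi> = fps_X + fps_X ^ (s + 1) * \<rho>" and "\<rho> $ 0 \<noteq> 0"
proof -
  define j where "j = subdegree (\<psi> - fps_X)"
  define \<rho> where "\<rho> = fps_shift j (\<psi> - fps_X)"
  have "\<psi> - fps_X \<noteq> 0" using assms(3) by simp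
  have "j \<ge> 2" unfolding j_def
    by (rule subdegree_geI[OF \<open>\<psi> - fps_X \<noteq> 0\<close>]) (use assms(1,2) less_2_cases in auto)
  have "\<psi> - fps_X = fps_X ^ j * \<rho>"
    unfolding \<rho>_def j_def by (rule fps_conv_fps_X_power_mult_fps_shift) simp
  have "(\<psi> - fps_X) $ j \<noteq> 0"
    unfolding j_def using \<open>\<psi> - fps_X \<noteq> 0\<close> by (rule nth_subdegree_nonzero)
  show ?thesis
  proof (rule that)
    show "j - 1 \<ge> 1" "subdegree (\<psi> - fps_X) = j - 1 + 1"
      using \<open>j \<ge> 2\<close> by (simp_all add: j_def)
    show "\<psi> = fps_X + fps_X ^ (j - 1 + 1) * \<rho>"
      using \<open>\<psi> - fps_X = fps_X ^ j * \<rho>\<close> \<open>j \<ge> 2\<close> by (simp add: algebra_simps)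
    show "\<rho> $ 0 \<noteq> 0"
      using \<open>(\<psi> - fps_X) $ j \<noteq> 0\<close> by (simp add: \<rho>_def del: fps_sub_nth)
  qed
qed

lemma tangent_to_identity_fixing_agree_X:
  fixes d \<psi> :: "'a::{idom,ring_char_0} fps"
  assumes "\<psi> $ 0 = 0" "\<psi> $ 1 = 1" "d $ 0 = 0" "d \<noteq> 0"
    and fixes_d: "fps_agree (subdegree d + K) (d oo \<psi>) d"
  shows "fps_agree (K + 1) \<psi> fps_X"
proof (rule ccontr)
  assume "\<not> fps_agree (K + 1) \<psi> fps_X"
  then obtain m where "m \<le> K" "(\<psi> - fps_X) $ m \<noteq> 0"
    by (fastforce simp: fps_agree_def less_Suc_eq_le)
  then have "\<psi> \<noteq> fps_X" "subdegree (\<psi> - fps_X) \<le> K"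
    using subdegree_leI[of "\<psi> - fps_X" m] by auto
  then obtain s \<rho> where "s \<ge> 1" "subdegree (\<psi> - fps_X) = s + 1"
    and \<psi>_eq: "\<psi> = fps_X + fps_X ^ (s + 1) * \<rho>" and "\<rho> $ 0 \<noteq> 0"
    using tangent_to_identity_decompose[OF assms(1,2)] by blast
  have "s < K" using \<open>subdegree (\<psi> - fps_X) \<le> K\<close> \<open>subdegree (\<psi> - fps_X) = s + 1\<close> by simp
  have "(d oo \<psi>) $ (subdegree d + s)
      = d $ (subdegree d + s) + of_nat (subdegree d) * d $ subdegree d * \<rho> $ 0"
    using \<open>s \<ge> 1\<close> \<psi>_eq by (rule near_identity_compose_nth_subdegree)
  moreover have "(d oo \<psi>) $ (subdegree d + s) = d $ (subdegree d + s)"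
    using fixes_d \<open>s < K\<close> by (simp add: fps_agree_def)
  moreover have "subdegree d > 0" using assms(3,4) by (rule subdegree_pos)
  ultimately show False
    using \<open>\<rho> $ 0 \<noteq> 0\<close> assms(4) by simp
qed

lemma reparam_drift_eq_0:
  fixes h d b :: "'a::{idom,ring_char_0} fps"
  assumes "h $ 0 = 0" "d $ 0 = 0" "d \<noteq> 0" "subdegree d dvd M" "M > 0"
    and fixes_d: "fps_agree (M + subdegree d) (d oo h) d"
    and drift: "fps_agree (M + 1) (b oo h) (b + fps_const \<beta> * fps_X ^ M)"
  shows "\<beta> = 0"
proof -
  define v where "v = subdegree d"
  have "v > 0" using assms(2,3) by (simp add: v_def subdegree_pos)
  have "(d oo h) $ v = d $ v * (h $ 1) ^ v"
    by (rule fps_compose_nth_subdegree) (auto simp: assms(1) v_def nth_less_subdegree_zero)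
  moreover have "(d oo h) $ v = d $ v"
    using fixes_d \<open>M > 0\<close> by (simp add: fps_agree_def v_def)
  ultimately have "(h $ 1) ^ v = 1"
    using assms(3) by (simp add: v_def)
  moreover obtain q where "M = v * q" using assms(4) by (auto simp: v_def)
  ultimately have "(h $ 1) ^ M = 1" by (simp add: power_mult)
  define \<psi> where "\<psi> = fps_compose_pow v h"
  have "\<psi> $ 1 = 1"
    using \<open>(h $ 1) ^ v = 1\<close> fps_compose_pow_nth_1[OF assms(1), of v] by (simp add: \<psi>_def)
  have "fps_agree (subdegree d + M) (d oo \<psi>) d"
    unfolding \<psi>_def using fps_agree_compose_pow_fixed[OF assms(1) fixes_d] by (simp add: add.commute)
  then have "fps_agree (M + 1) \<psi> fps_X"
    using tangent_to_identity_fixing_agree_X[OF _ \<open>\<psi> $ 1 = 1\<close> assms(2,3)] by (simp add: \<psi>_def)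
  then have "fps_agree (M + 1) b (b oo \<psi>)"
    using fps_agree_compose_right[of "M + 1" \<psi> fps_X b] by (simp add: fps_agree_sym)
  also have "fps_agree (M + 1) (b oo \<psi>) (b + fps_const (of_nat v * \<beta>) * fps_X ^ M)"
    unfolding \<psi>_def by (rule fps_agree_compose_pow_drift[OF assms(1) \<open>(h $ 1) ^ M = 1\<close> drift])
  finally have "b $ M = (b + fps_const (of_nat v * \<beta>) * fps_X ^ M) $ M"
    by (meson fps_agree_def less_add_one)
  then show "\<beta> = 0" using \<open>v > 0\<close> by simp
qed

lemma half_corner_no_invariant_arc:
  assumes "in_m2 Q" "beta \<noteq> 0" "d \<noteq> 0"
  shows "\<not> invariant_arc (half_corner c beta bx by' bz P Q R) (a, b, d)"
proof
  assume "invariant_arc (half_corner c beta bx by' bz P Q R) (a, b, d)"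
  then obtain h where "a $ 0 = 0" "b $ 0 = 0" "d $ 0 = 0" "h $ 0 = 0"
    and image: "half_corner c beta bx by' bz P Q R (a, b, d) = (a oo h, b oo h, d oo h)"
    unfolding invariant_arc_def formal_arc_def arc_compose_def by auto
  define U where "U = fps_const beta + fps_const bx * a + fps_const by' * b + fps_const bz * d
    + mps3_eval Q a b d"
  define v where "v = subdegree d"
  define M where "M = v * (c + 1)"
  have eq_b: "b oo h = b + d ^ (c + 1) * U" and eq_d: "d oo h = d + d ^ (c + 2) * mps3_eval R a b d"
    using image by (simp_all add: half_corner_def U_def)
  have degree: "subdegree d * (c + 2) = M + subdegree d"
    by (simp add: M_def v_def algebra_simps)
  have fixes_d: "fps_agree (M + subdegree d) (d oo h) d"
    unfolding eq_d using fps_agree_add_power_mult(1)[of d "c + 2" d "mps3_eval R a b d"]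
    by (simp only: degree)
  have "Q 0 0 0 = 0" using assms(1) by (simp add: in_m2_def)
  then have "U $ 0 = beta"
    using \<open>a $ 0 = 0\<close> \<open>b $ 0 = 0\<close> \<open>d $ 0 = 0\<close> by (simp add: U_def)
  then have drift: "fps_agree (M + 1) (b oo h) (b + fps_const ((d $ v) ^ (c + 1) * beta) * fps_X ^ M)"
    using fps_agree_add_power_mult(2)[of d "c + 1" b U] by (simp add: eq_b M_def v_def)
  have "v > 0" using \<open>d $ 0 = 0\<close> assms(3) by (simp add: v_def subdegree_pos)
  then have "subdegree d dvd M" "M > 0" by (simp_all add: M_def v_def)
  then have "(d $ v) ^ (c + 1) * beta = 0"
    using reparam_drift_eq_0[OF \<open>h $ 0 = 0\<close> \<open>d $ 0 = 0\<close> assms(3) _ _ fixes_d drift] by blast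
  then show False using assms(2,3) by (simp add: v_def)
qed

section \<open>The transverse invariant curve when \<beta> = 0\<close>

lemma causal_map_unique_fixpoint:
  fixes F :: "(nat \<Rightarrow> 'a) \<Rightarrow> nat \<Rightarrow> 'a"
  assumes causal: "\<And>x y n. (\<And>m. m < n \<Longrightarrow> x m = y m) \<Longrightarrow> F x n = F y n"
  shows "\<exists>!x. F x = x"
proof -
  define z where "z k = (F ^^ k) (\<lambda>_. undefined)" for k
  have z_Suc: "z (Suc k) = F (z k)" for k
    by (simp add: z_def)
  have z_step: "z (Suc k) m = z k m" if "m < k" for k m
    using that
  proof (induction k arbitrary: m)
    case 0
    then show ?case by simp
  next
    case (Suc k)
    have "F (z (Suc k)) m = F (z k) m"
      by (rule causal) (use Suc in simp)
    then show ?case by (simp add: z_Suc)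
  qed
  have z_stable: "z k m = z (Suc m) m" if "m < k" for k m
    using that
  proof (induction k)
    case 0
    then show ?case by simp
  next
    case (Suc k)
    then show ?case by (metis less_antisym z_step)
  qed
  define x where "x m = z (Suc m) m" for m
  have "F x m = x m" for m
  proof -
    have "F x m = F (z (Suc m)) m"
    proof (rule causal)
      fix i
      assume "i < m"
      then show "x i = z (Suc m) i" by (simp add: x_def z_stable[of i "Suc m"])
    qed
    also have "\<dots> = x m"
      by (simp add: x_def z_step flip: z_Suc)
    finally show ?thesis .
  qed
  then have fixpoint: "F x = x" ..
  have unique: "y = x" if "F y = y" for y
  proof
    fix n
    show "y n = x n"
    proof (induction n rule: less_induct)
      case (less n)
      have "y n = F y n" using that by simp
      also have "\<dots> = F x n" by (rule causal) (rule less)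
      finally show ?case using fixpoint by simp
    qed
  qed
  show ?thesis by (intro ex1I[of _ x] fixpoint unique)
qed

definition fps_with_zero_const :: "(nat \<Rightarrow> 'a::zero) \<Rightarrow> 'a fps" where
  "fps_with_zero_const x = Abs_fps (\<lambda>n. if n = 0 then 0 else x n)"

lemma fps_with_zero_const_nth [simp]: "fps_with_zero_const x $ n = (if n = 0 then 0 else x n)"
  by (simp add: fps_with_zero_const_def)

context
  fixes c :: nat and bx by' bz :: complex and P Q R :: mps3
begin

definition forced_reparam :: "complex fps \<Rightarrow> complex fps \<Rightarrow> complex fps" where
  "forced_reparam a b = fps_X + fps_X ^ (c + 2) * mps3_eval R a b fps_X"

definition coeff_rec_a :: "complex fps \<Rightarrow> complex fps \<Rightarrow> nat \<Rightarrow> complex" where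
  "coeff_rec_a a b n =
    (\<Sum>i<n. a $ i * (forced_reparam a b ^ i - fps_X ^ i) $ (n + c)) - mps3_eval P a b fps_X $ n"

(* Using coeff_rec_a instead of a $ n keeps b_n a function of lower coefficients. At n = 0 the
   denominator may vanish (and x / 0 = 0), but so does the numerator when P, Q \<in> m^2. *)
definition coeff_rec_b :: "complex fps \<Rightarrow> complex fps \<Rightarrow> nat \<Rightarrow> complex" where
  "coeff_rec_b a b n =
    (bx * coeff_rec_a a b n + (if n = 1 then bz else 0) + mps3_eval Q a b fps_X $ n
      - (\<Sum>i<n. b $ i * (forced_reparam a b ^ i - fps_X ^ i) $ (n + c + 1)))
    / (of_nat n * R 0 0 0 - by')"

lemma forced_reparam_eq: "forced_reparam a b = fps_X + fps_X ^ ((c + 1) + 1) * mps3_eval R a b fps_X"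
  by (simp add: forced_reparam_def)

lemma invariant_transverse_arc_iff_compose:
  assumes "a $ 0 = 0" "b $ 0 = 0"
  shows "invariant_arc (half_corner c 0 bx by' bz P Q R) (a, b, fps_X) \<longleftrightarrow>
    a + fps_X ^ c * (a + mps3_eval P a b fps_X) = a oo forced_reparam a b \<and>
    b + fps_X ^ (c + 1) * (fps_const bx * a + fps_const by' * b + fps_const bz * fps_X
      + mps3_eval Q a b fps_X) = b oo forced_reparam a b"
proof -
  define A where "A = a + fps_X ^ c * (a + mps3_eval P a b fps_X)"
  define B where "B = b + fps_X ^ (c + 1) * (fps_const bx * a + fps_const by' * b
    + fps_const bz * fps_X + mps3_eval Q a b fps_X)"
  have image: "half_corner c 0 bx by' bz P Q R (a, b, fps_X) = (A, B, forced_reparam a b)"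
    by (simp add: half_corner_def forced_reparam_def A_def B_def)
  have "forced_reparam a b $ 0 = 0" by (simp add: forced_reparam_def)
  then have "(\<exists>h. h $ 0 = 0 \<and> (A, B, forced_reparam a b) = (a oo h, b oo h, fps_X oo h))
      \<longleftrightarrow> A = a oo forced_reparam a b \<and> B = b oo forced_reparam a b"
    by auto
  then show ?thesis
    using assms unfolding invariant_arc_def formal_arc_def arc_compose_def image A_def B_def
    by simp
qed

lemma compose_eq_iff_coeff_rec_a:
  "a + fps_X ^ c * (a + mps3_eval P a b fps_X) = a oo forced_reparam a b \<longleftrightarrow>
    (\<forall>n. a $ n = coeff_rec_a a b n)"
proof -
  let ?D = "\<lambda>i N. (forced_reparam a b ^ i - fps_X ^ i) $ N"
  have "?D n (n + c) = 0" for n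
    by (rule near_identity_power_diff_nth_below[OF _ forced_reparam_eq]) simp_all
  then have "(\<Sum>i\<le>n. a $ i * ?D i (n + c)) = (\<Sum>i<n. a $ i * ?D i (n + c))" for n
    by (simp add: lessThan_Suc_atMost[symmetric] del: fps_sub_nth)
  then have coeff_iff: "(a + mps3_eval P a b fps_X) $ n = (\<Sum>i\<le>n. a $ i * ?D i (n + c))
      \<longleftrightarrow> a $ n = coeff_rec_a a b n" for n
    by (simp add: coeff_rec_a_def eq_diff_eq del: fps_sub_nth)
  have "a + fps_X ^ c * (a + mps3_eval P a b fps_X) = a oo forced_reparam a b \<longleftrightarrow>
      (\<forall>n. (a + mps3_eval P a b fps_X) $ n = (\<Sum>i\<le>n. a $ i * ?D i (n + c)))"
    by (rule near_identity_compose_eq_iff[OF _ forced_reparam_eq]) simp_all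
  with coeff_iff show ?thesis by blast
qed

lemma compose_eq_iff_coeff_rec_b:
  assumes "in_m2 Q" "a $ 0 = 0" "b $ 0 = 0" and rec_a: "\<forall>n. a $ n = coeff_rec_a a b n"
    and nonres: "\<And>n. n \<ge> 1 \<Longrightarrow> of_nat n * R 0 0 0 \<noteq> by'"
  shows "b + fps_X ^ (c + 1) * (fps_const bx * a + fps_const by' * b + fps_const bz * fps_X
      + mps3_eval Q a b fps_X) = b oo forced_reparam a b \<longleftrightarrow>
    (\<forall>n. b $ n = coeff_rec_b a b n)"
proof -
  let ?D = "\<lambda>i N. (forced_reparam a b ^ i - fps_X ^ i) $ N"
  let ?S = "\<lambda>n. \<Sum>i<n. b $ i * ?D i (n + c + 1)"
  let ?g = "fps_const bx * a + fps_const by' * b + fps_const bz * fps_X + mps3_eval Q a b fps_X"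
  have "?D n (n + (c + 1)) = of_nat n * R 0 0 0" for n
    using near_identity_power_diff_nth_diag[OF _ forced_reparam_eq, where i = n] by simp
  then have sum_eq: "(\<Sum>i\<le>n. b $ i * ?D i (n + (c + 1))) = ?S n + b $ n * (of_nat n * R 0 0 0)" for n
    by (simp add: lessThan_Suc_atMost[symmetric] add.assoc del: fps_sub_nth)
  have coeff_iff: "?g $ n = (\<Sum>i\<le>n. b $ i * ?D i (n + (c + 1))) \<longleftrightarrow> b $ n = coeff_rec_b a b n"
    for n
  proof (cases "n = 0")
    case True
    then show ?thesis
      using assms(1-3) rec_a by (simp add: coeff_rec_b_def in_m2_def)
  next
    case False
    then have "of_nat n * R 0 0 0 - by' \<noteq> 0" using nonres by simp
    then show ?thesis
      using rec_a unfolding sum_eq coeff_rec_b_def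
      by (simp add: eq_divide_eq algebra_simps del: fps_sub_nth) (auto simp: algebra_simps)
  qed
  have "b + fps_X ^ (c + 1) * ?g = b oo forced_reparam a b \<longleftrightarrow>
      (\<forall>n. ?g $ n = (\<Sum>i\<le>n. b $ i * ?D i (n + (c + 1))))"
    by (rule near_identity_compose_eq_iff[OF _ forced_reparam_eq]) simp_all
  with coeff_iff show ?thesis by blast
qed

lemma invariant_transverse_arc_iff:
  assumes "in_m2 Q" "a $ 0 = 0" "b $ 0 = 0"
    and nonres: "\<And>n. n \<ge> 1 \<Longrightarrow> of_nat n * R 0 0 0 \<noteq> by'"
  shows "invariant_arc (half_corner c 0 bx by' bz P Q R) (a, b, fps_X) \<longleftrightarrow>
    (\<forall>n. a $ n = coeff_rec_a a b n) \<and> (\<forall>n. b $ n = coeff_rec_b a b n)"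
  using invariant_transverse_arc_iff_compose[OF assms(2,3)] compose_eq_iff_coeff_rec_a
    compose_eq_iff_coeff_rec_b[OF assms(1-3) _ nonres]
  by blast

lemma coeff_rec_causal:
  assumes "in_m2 P" "in_m2 Q" "a $ 0 = 0" "b $ 0 = 0" "a' $ 0 = 0" "b' $ 0 = 0"
    and "fps_agree n a a'" "fps_agree n b b'"
  shows "coeff_rec_a a b n = coeff_rec_a a' b' n \<and> coeff_rec_b a b n = coeff_rec_b a' b' n"
proof -
  have "fps_agree (n + (c + 2)) (forced_reparam a b) (forced_reparam a' b')"
    unfolding forced_reparam_def
    by (intro fps_agree_add fps_agree_refl fps_agree_X_power_mult fps_agree_mps3_eval assms(7,8))
  then have "fps_agree (n + (c + 2)) (forced_reparam a b ^ i - fps_X ^ i) (forced_reparam a' b' ^ i - fps_X ^ i)"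
    for i by (intro fps_agree_diff fps_agree_power fps_agree_refl)
  then have D_eq: "(forced_reparam a b ^ i - fps_X ^ i) $ N = (forced_reparam a' b' ^ i - fps_X ^ i) $ N"
    if "N < n + (c + 2)" for i N
    using that unfolding fps_agree_def by blast
  have P_eq: "mps3_eval P a b fps_X $ n = mps3_eval P a' b' fps_X $ n"
    and Q_eq: "mps3_eval Q a b fps_X $ n = mps3_eval Q a' b' fps_X $ n"
    using fps_agree_mps3_eval_m2[OF assms(1) _ _ _ _ _ _ assms(7,8) fps_agree_refl]
      fps_agree_mps3_eval_m2[OF assms(2) _ _ _ _ _ _ assms(7,8) fps_agree_refl] assms(3-6)
    by (simp_all add: fps_agree_def)
  have "i < n \<Longrightarrow> a $ i = a' $ i" "i < n \<Longrightarrow> b $ i = b' $ i" for i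
    using assms(7,8) by (simp_all add: fps_agree_def)
  then have "(\<Sum>i<n. a $ i * (forced_reparam a b ^ i - fps_X ^ i) $ (n + c))
      = (\<Sum>i<n. a' $ i * (forced_reparam a' b' ^ i - fps_X ^ i) $ (n + c))"
    and "(\<Sum>i<n. b $ i * (forced_reparam a b ^ i - fps_X ^ i) $ (n + c + 1))
      = (\<Sum>i<n. b' $ i * (forced_reparam a' b' ^ i - fps_X ^ i) $ (n + c + 1))"
    by (auto intro!: sum.cong simp: D_eq simp del: fps_sub_nth)
  then show ?thesis
    by (simp add: coeff_rec_a_def coeff_rec_b_def P_eq Q_eq del: fps_sub_nth)
qed

(* The constant terms are forced to 0 so that the step is causal for every u: the terms of P
   and Q in m^2 gain an order only on series without constant term. *)
definition coeff_rec_step :: "(nat \<Rightarrow> complex \<times> complex) \<Rightarrow> nat \<Rightarrow> complex \<times> complex" where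
  "coeff_rec_step u n =
    (let a = fps_with_zero_const (fst \<circ> u); b = fps_with_zero_const (snd \<circ> u)
     in (coeff_rec_a a b n, coeff_rec_b a b n))"

lemma coeff_rec_step_0: "in_m2 P \<Longrightarrow> in_m2 Q \<Longrightarrow> coeff_rec_step u 0 = (0, 0)"
  by (simp add: coeff_rec_step_def coeff_rec_a_def coeff_rec_b_def in_m2_def)

lemma coeff_rec_step_causal:
  assumes "in_m2 P" "in_m2 Q" "\<And>m. m < n \<Longrightarrow> u m = u' m"
  shows "coeff_rec_step u n = coeff_rec_step u' n"
  using coeff_rec_causal[OF assms(1,2)] assms(3)
  unfolding coeff_rec_step_def Let_def by (simp add: fps_agree_def)

lemma coeff_rec_step_fixpoint_iff:
  assumes "in_m2 P" "in_m2 Q" and nonres: "\<And>n. n \<ge> 1 \<Longrightarrow> of_nat n * R 0 0 0 \<noteq> by'"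
  shows "coeff_rec_step (\<lambda>n. (a $ n, b $ n)) = (\<lambda>n. (a $ n, b $ n)) \<longleftrightarrow>
    a $ 0 = 0 \<and> b $ 0 = 0 \<and> invariant_arc (half_corner c 0 bx by' bz P Q R) (a, b, fps_X)"
proof
  assume fixpoint: "coeff_rec_step (\<lambda>n. (a $ n, b $ n)) = (\<lambda>n. (a $ n, b $ n))"
  then have "a $ 0 = 0" "b $ 0 = 0"
    using coeff_rec_step_0[OF assms(1,2)] by (metis prod.inject)+
  then have "fps_with_zero_const (\<lambda>n. a $ n) = a" "fps_with_zero_const (\<lambda>n. b $ n) = b"
    by (auto simp: fps_eq_iff)
  then have "\<forall>n. a $ n = coeff_rec_a a b n \<and> b $ n = coeff_rec_b a b n"
    using fun_cong[OF fixpoint] by (simp add: coeff_rec_step_def o_def)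
  then show "a $ 0 = 0 \<and> b $ 0 = 0 \<and> invariant_arc (half_corner c 0 bx by' bz P Q R) (a, b, fps_X)"
    using invariant_transverse_arc_iff[OF assms(2) \<open>a $ 0 = 0\<close> \<open>b $ 0 = 0\<close> nonres]
      \<open>a $ 0 = 0\<close> \<open>b $ 0 = 0\<close> by blast
next
  assume "a $ 0 = 0 \<and> b $ 0 = 0 \<and> invariant_arc (half_corner c 0 bx by' bz P Q R) (a, b, fps_X)"
  then have "a $ 0 = 0" "b $ 0 = 0"
    and rec: "\<forall>n. a $ n = coeff_rec_a a b n \<and> b $ n = coeff_rec_b a b n"
    using invariant_transverse_arc_iff[OF assms(2) _ _ nonres] by blast+
  from \<open>a $ 0 = 0\<close> \<open>b $ 0 = 0\<close>
  have a_eq: "fps_with_zero_const (\<lambda>n. a $ n) = a" and b_eq: "fps_with_zero_const (\<lambda>n. b $ n) = b"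
    by (auto simp: fps_eq_iff)
  have "coeff_rec_step (\<lambda>n. (a $ n, b $ n)) n = (a $ n, b $ n)" for n
    unfolding coeff_rec_step_def o_def Let_def fst_conv snd_conv a_eq b_eq using rec by simp
  then show "coeff_rec_step (\<lambda>n. (a $ n, b $ n)) = (\<lambda>n. (a $ n, b $ n))" ..
qed

lemma half_corner_unique_transverse_arc:
  assumes "in_m2 P" "in_m2 Q" and nonres: "\<And>n. n \<ge> 1 \<Longrightarrow> of_nat n * R 0 0 0 \<noteq> by'"
  shows "\<exists>!(a, b). a $ 0 = 0 \<and> b $ 0 = 0 \<and>
    invariant_arc (half_corner c 0 bx by' bz P Q R) (a, b, fps_X)"
proof -
  obtain u where fixpoint: "coeff_rec_step u = u"
    and unique: "\<And>u'. coeff_rec_step u' = u' \<Longrightarrow> u' = u"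
    using causal_map_unique_fixpoint[of coeff_rec_step] coeff_rec_step_causal[OF assms(1,2)] by metis
  define a where "a = fps_with_zero_const (fst \<circ> u)"
  define b where "b = fps_with_zero_const (snd \<circ> u)"
  have "u 0 = (0, 0)" using fixpoint coeff_rec_step_0[OF assms(1,2)] by metis
  then have "u = (\<lambda>n. (a $ n, b $ n))"
    by (auto simp: a_def b_def prod_eq_iff)
  show ?thesis
  proof (rule ex1I[of _ "(a, b)"])
    show "case (a, b) of (a, b) \<Rightarrow>
        a $ 0 = 0 \<and> b $ 0 = 0 \<and> invariant_arc (half_corner c 0 bx by' bz P Q R) (a, b, fps_X)"
      using coeff_rec_step_fixpoint_iff[OF assms] fixpoint \<open>u = (\<lambda>n. (a $ n, b $ n))\<close> by simp
  next
    fix p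
    assume "case p of (a, b) \<Rightarrow>
        a $ 0 = 0 \<and> b $ 0 = 0 \<and> invariant_arc (half_corner c 0 bx by' bz P Q R) (a, b, fps_X)"
    then obtain a' b' where "p = (a', b')"
      and "coeff_rec_step (\<lambda>n. (a' $ n, b' $ n)) = (\<lambda>n. (a' $ n, b' $ n))"
      using coeff_rec_step_fixpoint_iff[OF assms] by (cases p) auto
    then have "(\<lambda>n. (a' $ n, b' $ n)) = (\<lambda>n. (a $ n, b $ n))"
      using unique \<open>u = (\<lambda>n. (a $ n, b $ n))\<close> by metis
    then show "p = (a, b)"
      using \<open>p = (a', b')\<close> by (simp add: fun_eq_iff fps_eq_iff)
  qed
qed

end

theorem proposition5p2:
  fixes c :: nat and beta bx by' bz gamma :: complex and P Q R :: mps3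
  assumes "c \<ge> 1"
    and "in_m2 P" and "in_m2 Q"
    and "R 0 0 0 = gamma"
  shows "(beta \<noteq> 0 \<longrightarrow>
           \<not> (\<exists>a b d. d \<noteq> 0 \<and> invariant_arc (half_corner c beta bx by' bz P Q R) (a, b, d)))
       \<and> (beta = 0 \<and> \<not> (\<exists>n::nat. n \<ge> 1 \<and> by' = gamma * of_nat n) \<longrightarrow>
           (\<exists>!(a, b). fps_nth a 0 = 0 \<and> fps_nth b 0 = 0 \<and>
              invariant_arc (half_corner c beta bx by' bz P Q R) (a, b, fps_X)))"
proof (intro conjI impI)
  assume "beta \<noteq> 0"
  then show "\<not> (\<exists>a b d. d \<noteq> 0 \<and> invariant_arc (half_corner c beta bx by' bz P Q R) (a, b, d))"
    using half_corner_no_invariant_arc[OF assms(3)] by blast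
next
  assume "beta = 0 \<and> \<not> (\<exists>n::nat. n \<ge> 1 \<and> by' = gamma * of_nat n)"
  then have "beta = 0" and "\<And>n. n \<ge> 1 \<Longrightarrow> of_nat n * R 0 0 0 \<noteq> by'"
    using assms(4) by (auto simp: mult.commute)
  then show "\<exists>!(a, b). fps_nth a 0 = 0 \<and> fps_nth b 0 = 0 \<and>
      invariant_arc (half_corner c beta bx by' bz P Q R) (a, b, fps_X)"
    using half_corner_unique_transverse_arc[OF assms(2,3)] by simp
qed

end
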